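(* Consider the network and the protocols described in the context. Let fairMAC$_0$ denote fairMAC with a finite maximum number of pending packets $P$ and with maximum number of forwarded packets per joint packet $Q=0$. Then the long-term throughput per node and the long-term bit-cost of every node under fairMAC$_0$ equal those of Direct Link: $$\mathsf{S}^{\mathrm{fair}_0}=\mathsf{S}^{\mathrm{direct}}\quad\text{and}\quad \mathsf{B}^{\mathrm{fair}_0}_k=\mathsf{B}^{\mathrm{direct}}_k\ \text{ for all } k=1,\dots,N.$$
   Context: Network model: $N$ nodes transmit data to a common access point (AP). For nodes $k,l$, $R_{kl}>0$ is the achievable rate (bit/s) from $k$ to $l$, and $R_k>0$ the rate from $k$ directly to the AP; rates are constant in time. Each packet carries 1 bit of data, so a transmission at rate $R$ lasts $1/R$. Node $h$ is the helper $h_k$ of node $k$ iff $h=\arg\min_{l}\bigl(1/R_{kl}+1/R_l\bigr)$ and $1/R_{kh}+1/R_h<1/R_k$; otherwise $k$ has no helper. All nodes transmit with the same power $\mathcal{E}$ while transmitting. All nodes are saturated (always have own data to send). Medium access is slotted CSMA with slot length $\sigma$ and transmit probability $\tau$: a node that senses an idle slot starts a transmission of an own packet in the next slot with probability $\tau$; a packet is lost (collision) iff another node transmits simultaneously; otherwise the receiver decodes it. Control headers and acknowledgments (ACKs) have negligible duration, are decodable by all nodes, and are never lost; the only packet losses are collisions. Direct Link: every node transmits each own packet directly to the AP at its rate; on success the AP sends an ACK; on collision the node retransmits the same packet later. fairMAC (parameters $P$, $Q$): a node $k$ with helper $h$ keeps a counter $p$ (pending packets, initially 0). While $p\le P$,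 $k$ sends its packet to $h$ at rate $R_{kh}$; if $h$ decodes it, $h$ appends it to an infinite forwarding queue, sends a "preACK" to $k$, and $k$ increases $p$ by one; once $p$ exceeds $P$, $k$ transmits its current packet directly to the AP. When a helper $h$ wins the medium it sends one joint packet at rate $R_h$ consisting of one own packet plus up to $Q$ packets from its forwarding queue; if no collision occurs the AP sends one "jointACK" to $h$ and to all nodes with data in the joint packet; $h$ removes these from its queue and each such source decreases $p$ by the number of its packets forwarded. Nodes without helper behave as in Direct Link. Throughput $\mathsf{S}_k$ of node $k$: long-term average number of own data bits of $k$ successfully delivered to the AP per unit time (forwarded data of others does not count). Average power $\bar{\mathcal{E}}_k$: $\mathcal{E}$ times the long-term fraction of time node $k$ transmits (including forwarding). Bit-cost $\mathsf{B}_k=\bar{\mathcal{E}}_k/\mathsf{S}_k$. All nodes have the same throughput, denoted $\mathsf{S}$. *)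

theory Defs
  imports "HOL-Probability.Probability"
begin

(* Nodes are 0..N-1.  R k l : rate from node k to node l,  Rap k : rate from k to the AP. *)

definition relay_cost :: "(nat \<Rightarrow> nat \<Rightarrow> real) \<Rightarrow> (nat \<Rightarrow> real) \<Rightarrow> nat \<Rightarrow> nat \<Rightarrow> real" where
  "relay_cost R Rap k l = 1 / R k l + 1 / Rap l"

definition is_helper :: "nat \<Rightarrow> (nat \<Rightarrow> nat \<Rightarrow> real) \<Rightarrow> (nat \<Rightarrow> real) \<Rightarrow> nat \<Rightarrow> nat \<Rightarrow> bool" where
  "is_helper N R Rap k h \<longleftrightarrow> h < N \<and> h \<noteq> k \<and>
     (\<forall>l<N. l \<noteq> k \<longrightarrow> relay_cost R Rap k h \<le> relay_cost R Rap k l) \<and>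
     relay_cost R Rap k h < 1 / Rap k"

(* ties in the argmin are resolved by an arbitrary (but fixed) choice *)
definition helper :: "nat \<Rightarrow> (nat \<Rightarrow> nat \<Rightarrow> real) \<Rightarrow> (nat \<Rightarrow> real) \<Rightarrow> nat \<Rightarrow> nat option" where
  "helper N R Rap k = (if \<exists>h. is_helper N R Rap k h then Some (SOME h. is_helper N R Rap k h) else None)"

record dstate =
  ddlv :: "nat \<Rightarrow> nat"     (* own packets delivered to the AP *)
  dtxt :: "nat \<Rightarrow> real"    (* total time spent transmitting *)
  dclk :: real

(* One contention epoch: an idle slot of length sigma is sensed, then every node
   independently transmits (tx k) in the next slot; if someone transmits the channel
   is busy for the longest transmission. *)
definition direct_step :: "nat \<Rightarrow> real \<Rightarrow> (nat \<Rightarrow> real) \<Rightarrow> (nat \<Rightarrow> bool) \<Rightarrow> dstate \<Rightarrow> dstate" where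
  "direct_step N \<sigma> Rap tx s =
    (let S = {k. k < N \<and> tx k};
         d = (\<lambda>k. 1 / Rap k);
         busy = (if S = {} then 0 else Max (d ` S));
         s1 = s\<lparr>dtxt := (\<lambda>j. dtxt s j + (if j \<in> S then d j else 0)), dclk := dclk s + \<sigma> + busy\<rparr>
     in if card S = 1 then
          (let k = the_elem S in s1\<lparr>ddlv := (ddlv s1)(k := ddlv s1 k + 1)\<rparr>)
        else s1)"

definition dinit :: dstate where
  "dinit = \<lparr>ddlv = (\<lambda>_. 0), dtxt = (\<lambda>_. 0), dclk = 0\<rparr>"

(* omega (n,k) : transmit decision of node k in epoch n *)
primrec direct_run :: "nat \<Rightarrow> real \<Rightarrow> (nat \<Rightarrow> real) \<Rightarrow> (nat \<times> nat \<Rightarrow> bool) \<Rightarrow> nat \<Rightarrow> dstate" where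
  "direct_run N \<sigma> Rap \<omega> 0 = dinit"
| "direct_run N \<sigma> Rap \<omega> (Suc n) = direct_step N \<sigma> Rap (\<lambda>k. \<omega> (n, k)) (direct_run N \<sigma> Rap \<omega> n)"

record fstate =
  pend :: "nat \<Rightarrow> nat"
  fq   :: "nat \<Rightarrow> nat list"   (* forwarding queue: list of source nodes of queued packets *)
  fdlv :: "nat \<Rightarrow> nat"        (* own packets delivered to the AP *)
  ftxt :: "nat \<Rightarrow> real"       (* total time spent transmitting (incl. forwarding) *)
  fclk :: real

definition to_helper :: "(nat \<Rightarrow> nat option) \<Rightarrow> nat \<Rightarrow> fstate \<Rightarrow> nat \<Rightarrow> bool" where
  "to_helper hlp P s k = (case hlp k of Some h \<Rightarrow> pend s k \<le> P | None \<Rightarrow> False)"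

definition fair_step :: "nat \<Rightarrow> real \<Rightarrow> (nat \<Rightarrow> nat \<Rightarrow> real) \<Rightarrow> (nat \<Rightarrow> real) \<Rightarrow> nat \<Rightarrow> nat
    \<Rightarrow> (nat \<Rightarrow> bool) \<Rightarrow> fstate \<Rightarrow> fstate" where
  "fair_step N \<sigma> R Rap P Q tx s =
    (let hlp = helper N R Rap;
         S = {k. k < N \<and> tx k};
         d = (\<lambda>k. if to_helper hlp P s k then 1 / R k (the (hlp k))
                  else (1 + real (length (take Q (fq s k)))) / Rap k);
         busy = (if S = {} then 0 else Max (d ` S));
         s1 = s\<lparr>ftxt := (\<lambda>j. ftxt s j + (if j \<in> S then d j else 0)), fclk := fclk s + \<sigma> + busy\<rparr>
     in if card S = 1 then
          (let k = the_elem S in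
           if to_helper hlp P s k then
             (let h = the (hlp k) in
              s1\<lparr>fq := (fq s1)(h := fq s1 h @ [k]), pend := (pend s1)(k := pend s1 k + 1)\<rparr>)
           else
             (let fw = take Q (fq s k) in
              s1\<lparr>fdlv := (\<lambda>j. fdlv s1 j + count_list fw j + (if j = k then 1 else 0)),
                 pend := (\<lambda>j. pend s1 j - count_list fw j),
                 fq := (fq s1)(k := drop Q (fq s k))\<rparr>))
        else s1)"

definition finit :: fstate where
  "finit = \<lparr>pend = (\<lambda>_. 0), fq = (\<lambda>_. []), fdlv = (\<lambda>_. 0), ftxt = (\<lambda>_. 0), fclk = 0\<rparr>"

primrec fair_run :: "nat \<Rightarrow> real \<Rightarrow> (nat \<Rightarrow> nat \<Rightarrow> real) \<Rightarrow> (nat \<Rightarrow> real) \<Rightarrow> nat \<Rightarrow> nat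
    \<Rightarrow> (nat \<times> nat \<Rightarrow> bool) \<Rightarrow> nat \<Rightarrow> fstate" where
  "fair_run N \<sigma> R Rap P Q \<omega> 0 = finit"
| "fair_run N \<sigma> R Rap P Q \<omega> (Suc n) =
     fair_step N \<sigma> R Rap P Q (\<lambda>k. \<omega> (n, k)) (fair_run N \<sigma> R Rap P Q \<omega> n)"

definition thr_direct where
  "thr_direct N \<sigma> Rap \<omega> k n = real (ddlv (direct_run N \<sigma> Rap \<omega> n) k) / dclk (direct_run N \<sigma> Rap \<omega> n)"

definition pow_direct where
  "pow_direct \<E> N \<sigma> Rap \<omega> k n = \<E> * dtxt (direct_run N \<sigma> Rap \<omega> n) k / dclk (direct_run N \<sigma> Rap \<omega> n)"

definition thr_fair where
  "thr_fair N \<sigma> R Rap P Q \<omega> k n =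
     real (fdlv (fair_run N \<sigma> R Rap P Q \<omega> n) k) / fclk (fair_run N \<sigma> R Rap P Q \<omega> n)"

definition pow_fair where
  "pow_fair \<E> N \<sigma> R Rap P Q \<omega> k n =
     \<E> * ftxt (fair_run N \<sigma> R Rap P Q \<omega> n) k / fclk (fair_run N \<sigma> R Rap P Q \<omega> n)"

definition coins :: "real \<Rightarrow> (nat \<times> nat \<Rightarrow> bool) measure" where
  "coins \<tau> = Pi\<^sub>M UNIV (\<lambda>_. measure_pmf (bernoulli_pmf \<tau>))"

end

theory Submission
  imports Defs
begin

text \<open>With \<open>Q = 0\<close> a helper never forwards anything, so the pending counter of a node never
decreases, and it increases in every epoch in which the node is the sole transmitter while still
sending to its helper. Almost surely every node is the sole transmitter in infinitely many epochs
(independent events of probability \<open>\<tau> (1 - \<tau>)\<^bsup>N-1\<^esup>\<close>), so from some finite epoch on every node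
transmits directly. From then on fairMAC and Direct Link, driven by the same coins, accumulate
deliveries, transmission times and elapsed time identically: the differences of these quantities
stay constant, while the elapsed time grows at least like \<open>\<sigma> n\<close>. Hence the throughput and power
averages of the two protocols differ by \<open>O(1/n)\<close> and have the same limits.\<close>

definition sole_transmitter :: "nat \<Rightarrow> nat \<Rightarrow> (nat \<times> nat \<Rightarrow> bool) \<Rightarrow> nat \<Rightarrow> bool" where
  "sole_transmitter N k \<omega> n \<longleftrightarrow> (\<forall>j<N. \<omega> (n, j) \<longleftrightarrow> j = k)"

lemma prob_space_coins: "prob_space (coins \<tau>)"
  unfolding coins_def by (intro prob_space_PiM measure_pmf.prob_space_axioms)

lemma prod_bernoulli_sole_transmitter:
  assumes "k < N" "0 \<le> \<tau>" "\<tau> \<le> 1"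
  shows "(\<Prod>j<N. measure (bernoulli_pmf \<tau>) {j = k}) = \<tau> * (1 - \<tau>) ^ (N - 1)"
proof -
  have "(\<Prod>j<N. measure (bernoulli_pmf \<tau>) {j = k})
      = measure (bernoulli_pmf \<tau>) {True} * (\<Prod>j\<in>{..<N} - {k}. measure (bernoulli_pmf \<tau>) {False})"
    using assms by (subst prod.remove[of _ k]) (auto intro!: prod.cong)
  also have "\<dots> = \<tau> * (1 - \<tau>) ^ (N - 1)"
    using assms by (simp add: measure_pmf_single)
  finally show ?thesis .
qed

lemma measure_coins_sole_transmitter:
  assumes "finite J" "k < N" "0 \<le> \<tau>" "\<tau> \<le> 1"
  shows "measure (coins \<tau>) {\<omega> \<in> space (coins \<tau>). \<forall>n\<in>J. sole_transmitter N k \<omega> n}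
       = (\<tau> * (1 - \<tau>) ^ (N - 1)) ^ card J"
proof -
  let ?B = "measure_pmf (bernoulli_pmf \<tau>)"
  interpret product_prob_space "\<lambda>_ :: nat \<times> nat. ?B" UNIV by unfold_locales
  have rows: "{\<omega> \<in> space (coins \<tau>). \<forall>n\<in>J. sole_transmitter N k \<omega> n}
      = {\<omega> \<in> space (Pi\<^sub>M UNIV (\<lambda>_. ?B)). \<forall>i\<in>J \<times> {..<N}. \<omega> i \<in> {snd i = k}}"
    by (auto simp: coins_def sole_transmitter_def)
  have "emeasure (coins \<tau>) {\<omega> \<in> space (coins \<tau>). \<forall>n\<in>J. sole_transmitter N k \<omega> n}
      = (\<Prod>i\<in>J \<times> {..<N}. emeasure ?B {snd i = k})"
    unfolding rows unfolding coins_def by (rule emeasure_PiM_Collect) (use assms in auto)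
  also have "\<dots> = (\<Prod>j<N. emeasure ?B {j = k}) ^ card J"
    using prod.cartesian_product[of "\<lambda>n j. emeasure ?B {j = k}" "{..<N}" J]
    by (simp add: case_prod_beta)
  also have "\<dots> = ennreal ((\<Prod>j<N. measure ?B {j = k}) ^ card J)"
    by (simp add: measure_pmf.emeasure_eq_measure prod_ennreal ennreal_power prod_nonneg)
  finally have "measure (coins \<tau>) {\<omega> \<in> space (coins \<tau>). \<forall>n\<in>J. sole_transmitter N k \<omega> n}
      = (\<Prod>j<N. measure ?B {j = k}) ^ card J"
    by (intro measure_eq_emeasure_eq_ennreal) (auto intro!: prod_nonneg zero_le_power)
  then show ?thesis
    using assms by (simp add: prod_bernoulli_sole_transmitter)
qed

lemma indep_events_sole_transmitter:
  assumes "k < N" "0 \<le> \<tau>" "\<tau> \<le> 1"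
  shows "prob_space.indep_events (coins \<tau>)
           (\<lambda>n. {\<omega> \<in> space (coins \<tau>). sole_transmitter N k \<omega> n}) UNIV"
proof -
  interpret prob_space "coins \<tau>" by (rule prob_space_coins)
  have single: "prob {\<omega> \<in> space (coins \<tau>). sole_transmitter N k \<omega> n} = \<tau> * (1 - \<tau>) ^ (N - 1)" for n
    using measure_coins_sole_transmitter[of "{n}"] assms by simp
  show ?thesis
  proof (rule indep_eventsI)
    show "{\<omega> \<in> space (coins \<tau>). sole_transmitter N k \<omega> n} \<in> events" for n
      unfolding coins_def sole_transmitter_def by measurable
    fix J :: "nat set" assume "finite J" "J \<noteq> {}"
    then have "(\<Inter>n\<in>J. {\<omega> \<in> space (coins \<tau>). sole_transmitter N k \<omega> n})
        = {\<omega> \<in> space (coins \<tau>). \<forall>n\<in>J. sole_transmitter N k \<omega> n}" by auto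
    then show "prob (\<Inter>n\<in>J. {\<omega> \<in> space (coins \<tau>). sole_transmitter N k \<omega> n})
        = (\<Prod>n\<in>J. prob {\<omega> \<in> space (coins \<tau>). sole_transmitter N k \<omega> n})"
      using \<open>finite J\<close> assms by (simp add: measure_coins_sole_transmitter single)
  qed
qed

lemma (in prob_space) AE_INFM_indep_events:
  fixes P :: "nat \<Rightarrow> 'a \<Rightarrow> bool"
  assumes indep: "indep_events (\<lambda>n. {x \<in> space M. P n x}) UNIV"
    and prob_ge: "\<And>n. p \<le> prob {x \<in> space M. P n x}" and "0 < p"
  shows "AE x in M. \<exists>\<^sub>\<infinity>n. P n x"
proof -
  let ?A = "\<lambda>m. \<Union>n\<in>{m..}. {x \<in> space M. P n x}"
  have [measurable]: "{x \<in> space M. P n x} \<in> events" for n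
    using indep by (auto simp: indep_events_def)
  have "(\<lambda>m. prob (?A m)) \<longlonglongrightarrow> prob (\<Inter>m. ?A m)"
    by (intro finite_Lim_measure_decseq decseq_SucI) (auto dest: Suc_leD)
  moreover have "p \<le> prob (?A m)" for m
    using prob_ge[of m] by (rule order_trans) (intro finite_measure_mono, auto)
  ultimately have "p \<le> prob (\<Inter>m. ?A m)"
    by (intro LIMSEQ_le_const) auto
  moreover have "prob (\<Inter>m. ?A m) = 0 \<or> prob (\<Inter>m. ?A m) = 1"
    using indep by (rule borel_0_1_law)
  ultimately have "prob (\<Inter>m. ?A m) = 1"
    using \<open>0 < p\<close> by auto
  then show ?thesis
    by (simp add: prob_eq_1 INFM_nat_le Bex_def)
qed

lemma AE_sole_transmitter_infinitely_often:
  assumes "0 < \<tau>" "\<tau> < 1"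
  shows "AE \<omega> in coins \<tau>. \<forall>k<N. \<exists>\<^sub>\<infinity>n. sole_transmitter N k \<omega> n"
proof -
  interpret prob_space "coins \<tau>" by (rule prob_space_coins)
  have "AE \<omega> in coins \<tau>. \<exists>\<^sub>\<infinity>n. sole_transmitter N k \<omega> n" if "k < N" for k
  proof (rule AE_INFM_indep_events)
    show "indep_events (\<lambda>n. {\<omega> \<in> space (coins \<tau>). sole_transmitter N k \<omega> n}) UNIV"
      using that assms by (intro indep_events_sole_transmitter) auto
    show "\<tau> * (1 - \<tau>) ^ (N - 1) \<le> prob {\<omega> \<in> space (coins \<tau>). sole_transmitter N k \<omega> n}" for n
      using measure_coins_sole_transmitter[of "{n}"] that assms by simp
    show "0 < \<tau> * (1 - \<tau>) ^ (N - 1)"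
      using assms by simp
  qed
  then have "AE \<omega> in coins \<tau>. \<forall>k\<in>{..<N}. \<exists>\<^sub>\<infinity>n. sole_transmitter N k \<omega> n"
    by (intro AE_finite_allI) auto
  then show ?thesis
    by (simp add: Ball_def)
qed

definition busy_time :: "(nat \<Rightarrow> real) \<Rightarrow> nat set \<Rightarrow> real" where
  "busy_time Rap S = (if S = {} then 0 else Max ((\<lambda>k. 1 / Rap k) ` S))"

context
  fixes N :: nat and \<sigma> :: real and R :: "nat \<Rightarrow> nat \<Rightarrow> real" and Rap :: "nat \<Rightarrow> real" and P :: nat
begin

lemma pend_fair_step_mono: "pend s j \<le> pend (fair_step N \<sigma> R Rap P 0 tx s) j"
  unfolding fair_step_def Let_def by auto

lemma incseq_pend_fair_run: "incseq (\<lambda>n. pend (fair_run N \<sigma> R Rap P 0 \<omega> n) j)"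
  by (rule incseq_SucI) (simp add: pend_fair_step_mono)

lemma pend_fair_step_to_helper:
  assumes "k < N" "\<forall>j<N. tx j \<longleftrightarrow> j = k" "to_helper (helper N R Rap) P s k"
  shows "pend (fair_step N \<sigma> R Rap P 0 tx s) k = Suc (pend s k)"
proof -
  have "{j. j < N \<and> tx j} = {k}"
    using assms(1,2) by auto
  then show ?thesis
    using assms(3) unfolding fair_step_def Let_def by (simp split: option.splits)
qed

lemma eventually_not_to_helper:
  assumes "k < N" and sole: "\<exists>\<^sub>\<infinity>n. sole_transmitter N k \<omega> n"
  shows "\<forall>\<^sub>F n in sequentially. \<not> to_helper (helper N R Rap) P (fair_run N \<sigma> R Rap P 0 \<omega> n) k"
proof (rule ccontr)
  let ?p = "\<lambda>n. pend (fair_run N \<sigma> R Rap P 0 \<omega> n) k"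
  let ?helping = "\<lambda>n. to_helper (helper N R Rap) P (fair_run N \<sigma> R Rap P 0 \<omega> n) k"
  assume "\<not> ?thesis"
  then have "\<exists>\<^sub>F n in sequentially. ?helping n"
    by (simp add: not_eventually)
  have helping: "?helping n" for n
  proof -
    obtain m where "n \<le> m" "?helping m"
      using \<open>\<exists>\<^sub>F n in sequentially. ?helping n\<close> by (auto simp: frequently_sequentially)
    then show ?thesis
      using incseqD[OF incseq_pend_fair_run[of \<omega> k] \<open>n \<le> m\<close>]
      by (auto simp: to_helper_def split: option.splits)
  qed
  have "\<exists>T. i \<le> ?p T" for i
  proof (induction i)
    case (Suc i)
    then obtain T where "i \<le> ?p T" by blast
    obtain n where "T \<le> n" "sole_transmitter N k \<omega> n"
      using sole by (auto simp: INFM_nat_le)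
    then have "?p (Suc n) = Suc (?p n)"
      using pend_fair_step_to_helper[OF \<open>k < N\<close> _ helping] by (simp add: sole_transmitter_def)
    moreover have "?p T \<le> ?p n"
      using incseq_pend_fair_run \<open>T \<le> n\<close> by (rule incseqD)
    ultimately show ?case
      using \<open>i \<le> ?p T\<close> by (metis Suc_le_mono le_trans)
  qed simp
  then obtain T where "Suc P \<le> ?p T" by blast
  with helping[of T] show False
    by (simp add: to_helper_def split: option.splits)
qed

lemma eventually_fair_run_direct_mode:
  assumes "\<forall>k<N. \<exists>\<^sub>\<infinity>n. sole_transmitter N k \<omega> n"
  shows "\<forall>\<^sub>F n in sequentially. \<forall>k<N. \<not> to_helper (helper N R Rap) P (fair_run N \<sigma> R Rap P 0 \<omega> n) k"
proof -
  have "\<forall>\<^sub>F n in sequentially. \<forall>k\<in>{..<N}. \<not> to_helper (helper N R Rap) P (fair_run N \<sigma> R Rap P 0 \<omega> n) k"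
    using assms by (intro eventually_ball_finite) (auto intro: eventually_not_to_helper)
  then show ?thesis
    by (simp add: Ball_def)
qed

definition dstate_of :: "fstate \<Rightarrow> dstate" where
  "dstate_of s = \<lparr>ddlv = fdlv s, dtxt = ftxt s, dclk = fclk s\<rparr>"

lemma dstate_of_fair_step:
  assumes "\<forall>j<N. \<not> to_helper (helper N R Rap) P s j"
  shows "dstate_of (fair_step N \<sigma> R Rap P 0 tx s) = direct_step N \<sigma> Rap tx (dstate_of s)"
proof -
  define S where "S = {j. j < N \<and> tx j}"
  have duration: "(if to_helper (helper N R Rap) P s j then 1 / R j (the (helper N R Rap j))
      else (1 + real (length (take 0 (fq s j)))) / Rap j) = 1 / Rap j" if "j \<in> S" for j
    using assms that by (simp add: S_def)
  then have busy: "(\<lambda>j. if to_helper (helper N R Rap) P s j then 1 / R j (the (helper N R Rap j))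
      else (1 + real (length (take 0 (fq s j)))) / Rap j) ` S = (\<lambda>j. 1 / Rap j) ` S"
    by (rule image_cong[OF refl])
  have "\<not> to_helper (helper N R Rap) P s (the_elem S)" if "card S = 1"
  proof -
    from that obtain k where "S = {k}" by (rule card_1_singletonE)
    then have "k < N" by (auto simp: S_def)
    then show ?thesis using assms \<open>S = {k}\<close> by simp
  qed
  then show ?thesis
    using duration
    unfolding fair_step_def direct_step_def dstate_of_def Let_def S_def[symmetric] busy
    by (auto simp: fun_eq_iff)
qed

definition dstate_offset :: "nat \<Rightarrow> dstate \<Rightarrow> dstate \<Rightarrow> real \<times> real \<times> real" where
  "dstate_offset j s d = (real (ddlv s j) - real (ddlv d j), dtxt s j - dtxt d j, dclk s - dclk d)"

lemma dstate_offset_direct_step: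
  "dstate_offset j (direct_step N \<sigma> Rap tx s) (direct_step N \<sigma> Rap tx d) = dstate_offset j s d"
  unfolding direct_step_def dstate_offset_def Let_def by auto

lemma dstate_offset_fair_run_direct_run:
  assumes direct: "\<forall>n\<ge>T. \<forall>k<N. \<not> to_helper (helper N R Rap) P (fair_run N \<sigma> R Rap P 0 \<omega> n) k"
    and "T \<le> n"
  shows "dstate_offset j (dstate_of (fair_run N \<sigma> R Rap P 0 \<omega> n)) (direct_run N \<sigma> Rap \<omega> n)
       = dstate_offset j (dstate_of (fair_run N \<sigma> R Rap P 0 \<omega> T)) (direct_run N \<sigma> Rap \<omega> T)"
  using \<open>T \<le> n\<close>
proof (induction n rule: dec_induct)
  case (step n)
  have "dstate_offset j (dstate_of (fair_run N \<sigma> R Rap P 0 \<omega> (Suc n))) (direct_run N \<sigma> Rap \<omega> (Suc n))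
      = dstate_offset j (direct_step N \<sigma> Rap (\<lambda>k. \<omega> (n, k)) (dstate_of (fair_run N \<sigma> R Rap P 0 \<omega> n)))
          (direct_step N \<sigma> Rap (\<lambda>k. \<omega> (n, k)) (direct_run N \<sigma> Rap \<omega> n))"
    using direct step.hyps by (simp add: dstate_of_fair_step)
  also have "\<dots> = dstate_offset j (dstate_of (fair_run N \<sigma> R Rap P 0 \<omega> n)) (direct_run N \<sigma> Rap \<omega> n)"
    by (rule dstate_offset_direct_step)
  finally show ?case
    using step.IH by simp
qed simp

lemma eventually_fair_run_direct_run_offset:
  assumes "\<forall>k<N. \<exists>\<^sub>\<infinity>n. sole_transmitter N k \<omega> n"
  obtains c_dlv c_txt c_clk where "\<forall>\<^sub>F n in sequentially.
      real (fdlv (fair_run N \<sigma> R Rap P 0 \<omega> n) j) = real (ddlv (direct_run N \<sigma> Rap \<omega> n) j) + c_dlv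
    \<and> ftxt (fair_run N \<sigma> R Rap P 0 \<omega> n) j = dtxt (direct_run N \<sigma> Rap \<omega> n) j + c_txt
    \<and> fclk (fair_run N \<sigma> R Rap P 0 \<omega> n) = dclk (direct_run N \<sigma> Rap \<omega> n) + c_clk"
proof -
  obtain T where direct: "\<forall>n\<ge>T. \<forall>k<N. \<not> to_helper (helper N R Rap) P (fair_run N \<sigma> R Rap P 0 \<omega> n) k"
    using eventually_fair_run_direct_mode[OF assms] by (auto simp: eventually_sequentially)
  obtain c_dlv c_txt c_clk where offset_T:
    "dstate_offset j (dstate_of (fair_run N \<sigma> R Rap P 0 \<omega> T)) (direct_run N \<sigma> Rap \<omega> T) = (c_dlv, c_txt, c_clk)"
    by (metis prod_cases3)
  have "\<forall>\<^sub>F n in sequentially.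
      real (fdlv (fair_run N \<sigma> R Rap P 0 \<omega> n) j) = real (ddlv (direct_run N \<sigma> Rap \<omega> n) j) + c_dlv
    \<and> ftxt (fair_run N \<sigma> R Rap P 0 \<omega> n) j = dtxt (direct_run N \<sigma> Rap \<omega> n) j + c_txt
    \<and> fclk (fair_run N \<sigma> R Rap P 0 \<omega> n) = dclk (direct_run N \<sigma> Rap \<omega> n) + c_clk"
    using eventually_ge_at_top[of T]
  proof eventually_elim
    case (elim n)
    show ?case
      using dstate_offset_fair_run_direct_run[OF direct elim, of j] offset_T
      by (simp add: dstate_offset_def dstate_of_def algebra_simps)
  qed
  then show ?thesis ..
qed

lemma direct_step_components:
  fixes tx :: "nat \<Rightarrow> bool"
  defines "S \<equiv> {j. j < N \<and> tx j}"
  shows "ddlv (direct_step N \<sigma> Rap tx s) j = ddlv s j + (if card S = 1 \<and> j = the_elem S then 1 else 0)"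
    and "dtxt (direct_step N \<sigma> Rap tx s) j = dtxt s j + (if j \<in> S then 1 / Rap j else 0)"
    and "dclk (direct_step N \<sigma> Rap tx s) = dclk s + \<sigma> + busy_time Rap S"
  unfolding direct_step_def busy_time_def Let_def S_def[symmetric] by auto

lemma ddlv_direct_run_le: "ddlv (direct_run N \<sigma> Rap \<omega> n) k \<le> n"
  by (induction n) (auto simp: direct_step_components dinit_def)

context
  assumes Rap_pos: "\<And>k. k < N \<Longrightarrow> 0 < Rap k"
begin

lemma busy_time_bounds:
  assumes "S \<subseteq> {..<N}"
  shows "0 \<le> busy_time Rap S" and "k \<in> S \<Longrightarrow> 1 / Rap k \<le> busy_time Rap S"
proof -
  have "finite S"
    using assms finite_subset by blast
  then have max_ge: "1 / Rap k \<le> Max ((\<lambda>k. 1 / Rap k) ` S)" if "k \<in> S" for k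
    using that by (intro Max_ge) auto
  show "k \<in> S \<Longrightarrow> 1 / Rap k \<le> busy_time Rap S"
    using max_ge by (auto simp: busy_time_def)
  show "0 \<le> busy_time Rap S"
  proof (cases "S = {}")
    case False
    then obtain k where "k \<in> S" by blast
    then have "0 < 1 / Rap k"
      using Rap_pos assms by auto
    with max_ge[OF \<open>k \<in> S\<close>] have "0 \<le> Max ((\<lambda>k. 1 / Rap k) ` S)"
      by linarith
    with False show ?thesis
      unfolding busy_time_def by simp
  qed (simp add: busy_time_def)
qed

lemma dclk_direct_run_ge: "\<sigma> * real n \<le> dclk (direct_run N \<sigma> Rap \<omega> n)"
proof (induction n)
  case (Suc n)
  have "{j. j < N \<and> \<omega> (n, j)} \<subseteq> {..<N}" by auto
  from busy_time_bounds(1)[OF this] show ?case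
    using Suc by (simp add: direct_step_components algebra_simps)
qed (simp add: dinit_def)

lemma filterlim_dclk_direct_run:
  assumes "0 < \<sigma>"
  shows "filterlim (\<lambda>n. dclk (direct_run N \<sigma> Rap \<omega> n)) at_top sequentially"
proof -
  have "filterlim (\<lambda>n. \<sigma> * real n) at_top sequentially"
    by (rule filterlim_tendsto_pos_mult_at_top[OF tendsto_const assms filterlim_real_sequentially])
  then show ?thesis
    by (rule filterlim_at_top_mono) (simp add: dclk_direct_run_ge)
qed

lemma dtxt_direct_run_bounds:
  assumes "0 \<le> \<sigma>"
  shows "0 \<le> dtxt (direct_run N \<sigma> Rap \<omega> n) k \<and> dtxt (direct_run N \<sigma> Rap \<omega> n) k \<le> dclk (direct_run N \<sigma> Rap \<omega> n)"
proof (induction n)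
  case (Suc n)
  let ?S = "{j. j < N \<and> \<omega> (n, j)}"
  have S: "?S \<subseteq> {..<N}" by auto
  have "0 \<le> (if k \<in> ?S then 1 / Rap k else 0)"
    using Rap_pos[of k] by auto
  moreover have "(if k \<in> ?S then 1 / Rap k else 0) \<le> busy_time Rap ?S"
    using busy_time_bounds[OF S] by auto
  ultimately show ?case
    using Suc assms unfolding direct_run.simps direct_step_components by linarith
qed (simp add: dinit_def)

end

end

lemma tendsto_diff_quotients_offset:
  fixes a a' b b' :: "'a \<Rightarrow> real"
  assumes offset: "\<forall>\<^sub>F x in F. a x = a' x + c \<and> b x = b' x + C"
    and b': "filterlim b' at_top F"
    and bound: "\<forall>\<^sub>F x in F. \<bar>a' x\<bar> \<le> K * b' x"
  shows "((\<lambda>x. a x / b x - a' x / b' x) \<longlongrightarrow> 0) F"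
proof (rule Lim_null_comparison)
  have "filterlim (\<lambda>x. C + b' x) at_top F"
    by (rule filterlim_tendsto_add_at_top[OF tendsto_const b'])
  moreover have "\<forall>\<^sub>F x in F. C + b' x = b x"
    using offset by eventually_elim simp
  ultimately have b: "filterlim b at_top F"
    using filterlim_mono_eventually[OF _ order_refl order_refl] by blast
  show "((\<lambda>x. (\<bar>c\<bar> + \<bar>K\<bar> * \<bar>C\<bar>) / b x) \<longlongrightarrow> 0) F"
    by (rule tendsto_divide_0[OF tendsto_const filterlim_at_top_imp_at_infinity[OF b]])
  have "\<forall>\<^sub>F x in F. 0 < b x" "\<forall>\<^sub>F x in F. 0 < b' x"
    using b b' by (simp_all add: filterlim_at_top_dense)
  with offset bound show "\<forall>\<^sub>F x in F. norm (a x / b x - a' x / b' x) \<le> (\<bar>c\<bar> + \<bar>K\<bar> * \<bar>C\<bar>) / b x"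
  proof eventually_elim
    case (elim x)
    have "\<bar>a' x / b' x\<bar> = \<bar>a' x\<bar> / b' x"
      using \<open>0 < b' x\<close> by simp
    also have "\<dots> \<le> K"
      using \<open>\<bar>a' x\<bar> \<le> K * b' x\<close> \<open>0 < b' x\<close> by (simp add: pos_divide_le_eq)
    finally have "\<bar>a' x / b' x\<bar> \<le> \<bar>K\<bar>"
      by linarith
    then have "\<bar>a' x / b' x * C\<bar> \<le> \<bar>K\<bar> * \<bar>C\<bar>"
      unfolding abs_mult by (rule mult_right_mono) simp
    then have "\<bar>c - a' x / b' x * C\<bar> \<le> \<bar>c\<bar> + \<bar>K\<bar> * \<bar>C\<bar>"
      using abs_triangle_ineq4[of c "a' x / b' x * C"] by linarith
    moreover have "a x / b x - a' x / b' x = (c - a' x / b' x * C) / b x"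
      using elim by (simp add: field_simps)
    ultimately show ?case
      using \<open>0 < b x\<close> by (simp add: divide_right_mono)
  qed
qed

lemma averages_fair_direct_diff_tendsto_zero:
  assumes Rap_pos: "\<And>k. k < N \<Longrightarrow> 0 < Rap k" and "0 < \<sigma>"
    and sole: "\<forall>k<N. \<exists>\<^sub>\<infinity>n. sole_transmitter N k \<omega> n"
  shows "(\<lambda>n. thr_fair N \<sigma> R Rap P 0 \<omega> k n - thr_direct N \<sigma> Rap \<omega> k n) \<longlonglongrightarrow> 0"
    and "(\<lambda>n. pow_fair \<E> N \<sigma> R Rap P 0 \<omega> k n - pow_direct \<E> N \<sigma> Rap \<omega> k n) \<longlonglongrightarrow> 0"
proof -
  let ?F = "fair_run N \<sigma> R Rap P 0 \<omega>" and ?D = "direct_run N \<sigma> Rap \<omega>"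
  obtain c_dlv c_txt c_clk where offset: "\<forall>\<^sub>F n in sequentially.
      real (fdlv (?F n) k) = real (ddlv (?D n) k) + c_dlv \<and> ftxt (?F n) k = dtxt (?D n) k + c_txt
    \<and> fclk (?F n) = dclk (?D n) + c_clk"
    using eventually_fair_run_direct_run_offset[OF sole] by blast
  note clock = filterlim_dclk_direct_run[OF Rap_pos \<open>0 < \<sigma>\<close>]
  show "(\<lambda>n. thr_fair N \<sigma> R Rap P 0 \<omega> k n - thr_direct N \<sigma> Rap \<omega> k n) \<longlonglongrightarrow> 0"
    unfolding thr_fair_def thr_direct_def
  proof (rule tendsto_diff_quotients_offset[OF _ clock])
    show "\<forall>\<^sub>F n in sequentially. real (fdlv (?F n) k) = real (ddlv (?D n) k) + c_dlv \<and> fclk (?F n) = dclk (?D n) + c_clk"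
      using offset by eventually_elim simp
    have "real (ddlv (?D n) k) \<le> 1 / \<sigma> * dclk (?D n)" for n
    proof -
      have "real (ddlv (?D n) k) \<le> real n"
        by (simp add: ddlv_direct_run_le)
      also have "\<dots> \<le> 1 / \<sigma> * dclk (?D n)"
        using dclk_direct_run_ge[where N=N and Rap=Rap and \<sigma>=\<sigma> and n=n and \<omega>=\<omega>, OF Rap_pos] \<open>0 < \<sigma>\<close>
        by (simp add: pos_le_divide_eq mult.commute)
      finally show ?thesis .
    qed
    then show "\<forall>\<^sub>F n in sequentially. \<bar>real (ddlv (?D n) k)\<bar> \<le> 1 / \<sigma> * dclk (?D n)"
      by simp
  qed
  show "(\<lambda>n. pow_fair \<E> N \<sigma> R Rap P 0 \<omega> k n - pow_direct \<E> N \<sigma> Rap \<omega> k n) \<longlonglongrightarrow> 0"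
    unfolding pow_fair_def pow_direct_def
  proof (rule tendsto_diff_quotients_offset[OF _ clock])
    show "\<forall>\<^sub>F n in sequentially. \<E> * ftxt (?F n) k = \<E> * dtxt (?D n) k + \<E> * c_txt \<and> fclk (?F n) = dclk (?D n) + c_clk"
      using offset by eventually_elim (simp add: algebra_simps)
    have "\<bar>\<E> * dtxt (?D n) k\<bar> \<le> \<bar>\<E>\<bar> * dclk (?D n)" for n
      using dtxt_direct_run_bounds[where N=N and Rap=Rap and \<sigma>=\<sigma> and \<omega>=\<omega> and n=n and k=k, OF Rap_pos] \<open>0 < \<sigma>\<close>
      by (simp add: abs_mult mult_left_mono)
    then show "\<forall>\<^sub>F n in sequentially. \<bar>\<E> * dtxt (?D n) k\<bar> \<le> \<bar>\<E>\<bar> * dclk (?D n)"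
      by simp
  qed
qed

theorem proposition1:
  fixes N P :: nat and \<sigma> \<tau> \<E> :: real
    and R :: "nat \<Rightarrow> nat \<Rightarrow> real" and Rap :: "nat \<Rightarrow> real"
  assumes "\<And>k l. k < N \<Longrightarrow> l < N \<Longrightarrow> k \<noteq> l \<Longrightarrow> R k l > 0"
    and "\<And>k. k < N \<Longrightarrow> Rap k > 0"
    and "\<sigma> > 0" and "0 < \<tau>" and "\<tau> < 1" and "\<E> > 0"
  shows "AE \<omega> in coins \<tau>. \<forall>k<N.
     (\<forall>S. (thr_fair N \<sigma> R Rap P 0 \<omega> k \<longlonglongrightarrow> S) \<longleftrightarrow> (thr_direct N \<sigma> Rap \<omega> k \<longlonglongrightarrow> S)) \<and>
     (\<forall>E. (pow_fair \<E> N \<sigma> R Rap P 0 \<omega> k \<longlonglongrightarrow> E) \<longleftrightarrow> (pow_direct \<E> N \<sigma> Rap \<omega> k \<longlonglongrightarrow> E)) \<and>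
     (\<forall>S E S' E'. thr_fair N \<sigma> R Rap P 0 \<omega> k \<longlonglongrightarrow> S \<longrightarrow> pow_fair \<E> N \<sigma> R Rap P 0 \<omega> k \<longlonglongrightarrow> E \<longrightarrow>
        thr_direct N \<sigma> Rap \<omega> k \<longlonglongrightarrow> S' \<longrightarrow> pow_direct \<E> N \<sigma> Rap \<omega> k \<longlonglongrightarrow> E' \<longrightarrow>
        E / S = E' / S')"
  using AE_sole_transmitter_infinitely_often[where N=N, OF \<open>0 < \<tau>\<close> \<open>\<tau> < 1\<close>]
proof eventually_elim
  case (elim \<omega>)
  have thr: "thr_fair N \<sigma> R Rap P 0 \<omega> k \<longlonglongrightarrow> S \<longleftrightarrow> thr_direct N \<sigma> Rap \<omega> k \<longlonglongrightarrow> S" for k S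
    by (rule Lim_transform_eq[OF averages_fair_direct_diff_tendsto_zero(1)[OF assms(2,3) elim]])
  have pow: "pow_fair \<E> N \<sigma> R Rap P 0 \<omega> k \<longlonglongrightarrow> E \<longleftrightarrow> pow_direct \<E> N \<sigma> Rap \<omega> k \<longlonglongrightarrow> E" for k E
    by (rule Lim_transform_eq[OF averages_fair_direct_diff_tendsto_zero(2)[OF assms(2,3) elim]])
  show ?case
    by (auto simp: thr pow dest: LIMSEQ_unique)
qed

end
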